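(* Let $(G_k)_{k\in\mathbb Z}$ be a gibonacci sequence and let $F_k$ denote the Fibonacci numbers. Let $r$, $n$, $t$, $m$ be integers with $r\ge1$, $n\ge 1$, such that $G_k\neq0$ for all $k$ with $t+1\le k\le n+t+r$. Then \begin{equation*} F_r \sum_{j = 1}^n \frac{(-1)^{rj} F_m^{n - j} F_{m - r}^{j - 1} G_{j + t + m}}{G_{j + t} G_{j + t + 1} \cdots G_{j + t + r}} = \frac{(-1)^{r(n - 1) + 1} F_{m - r}^n}{G_{n + t + 1} G_{n + t + 2} \cdots G_{n + t + r}} + \frac{(-1)^r F_m^n}{G_{t + 1} G_{t + 2} \cdots G_{t + r}}. \end{equation*}
   Context: A gibonacci sequence $(G_k)_{k\in\mathbb Z}$ is defined by arbitrary initial values $G_0=a$, $G_1=b$ (numbers, not both zero) and $G_k=G_{k-1}+G_{k-2}$ for all integers $k$. The Fibonacci numbers $F_k$ are the gibonacci sequence with $F_0=0$, $F_1=1$, extended to all integer indices by the same recurrence. The convention $0^0=1$ is used for powers. *)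

theory Defs
  imports Complex_Main
begin

definition is_gibonacci :: "(int \<Rightarrow> real) \<Rightarrow> bool" where
  "is_gibonacci G \<longleftrightarrow> (\<forall>k. G k = G (k - 1) + G (k - 2)) \<and> \<not> (G 0 = 0 \<and> G 1 = 0)"

definition fibz :: "int \<Rightarrow> real" where
  "fibz = (THE f. f 0 = 0 \<and> f 1 = 1 \<and> (\<forall>k. f k = f (k - 1) + f (k - 2)))"

end

theory Submission
  imports Defs
begin

text \<open>Any sequence G with the Fibonacci recurrence satisfies
  F(r) G(a + m) = F(m) G(a + r) - (-1)^r F(m - r) G(a): expand G(a + m) and G(a + r) in terms of
  G(a), G(a + 1) and apply d'Ocagne's identity. Dividing by G(a) G(a + 1) \<cdots> G(a + r) splits the
  left side into two partial fractions. For a = j + t and after multiplying by the weight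
  (-1)^(r j) F(m)^(n - j) F(m - r)^(j - 1), the j-th summand becomes U(j - 1) - U(j) with
  U = telescope_term, so the sum telescopes to U(0) - U(n).\<close>

definition fib_recurrent :: "(int \<Rightarrow> real) \<Rightarrow> bool" where
  "fib_recurrent f \<longleftrightarrow> (\<forall>k. f k = f (k - 1) + f (k - 2))"

lemma fib_recurrentD: "fib_recurrent f \<Longrightarrow> f k = f (k - 1) + f (k - 2)"
  unfolding fib_recurrent_def by blast

lemma fib_recurrent_lincomb:
  assumes "fib_recurrent f" "fib_recurrent g"
  shows "fib_recurrent (\<lambda>k. a * f k + b * g k)"
  unfolding fib_recurrent_def
proof
  fix k
  show "a * f k + b * g k = (a * f (k - 1) + b * g (k - 1)) + (a * f (k - 2) + b * g (k - 2))"
    using fib_recurrentD[OF assms(1), of k] fib_recurrentD[OF assms(2), of k]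
    by (simp add: algebra_simps)
qed

lemma fib_recurrent_shift:
  assumes "fib_recurrent f"
  shows "fib_recurrent (\<lambda>k. f (a + k))"
  unfolding fib_recurrent_def
proof
  fix k
  show "f (a + k) = f (a + (k - 1)) + f (a + (k - 2))"
    using fib_recurrentD[OF assms, of "a + k"] by (simp add: algebra_simps)
qed

lemma fib_recurrent_power_int:
  fixes x :: real
  assumes "x\<^sup>2 = x + 1"
  shows "fib_recurrent (\<lambda>k. x powi k)"
  unfolding fib_recurrent_def
proof
  fix k
  have "x \<noteq> 0" using assms by auto
  then have "x powi k = x powi (k - 2) * x\<^sup>2" "x powi (k - 1) = x powi (k - 2) * x"
    using power_int_add[of x "k - 2" 2] power_int_add[of x "k - 2" 1] by simp_all
  then show "x powi k = x powi (k - 1) + x powi (k - 2)"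
    using assms by (simp add: algebra_simps)
qed

lemma fib_recurrent_eq_0:
  assumes rec: "fib_recurrent h" and "h 0 = 0" "h 1 = 0"
  shows "h k = 0"
proof -
  have up: "h (int i) = 0 \<and> h (int i + 1) = 0" for i
  proof (induction i)
    case (Suc i)
    have "h (int i + 2) = h (int i + 1) + h (int i)"
      using fib_recurrentD[OF rec, of "int i + 2"] by (simp add: ac_simps)
    with Suc show ?case by (simp add: algebra_simps)
  qed (use assms in simp)
  have down: "h (- int i) = 0 \<and> h (1 - int i) = 0" for i
  proof (induction i)
    case (Suc i)
    have "h (1 - int i) = h (- int i) + h (- 1 - int i)"
      using fib_recurrentD[OF rec, of "1 - int i"] by simp
    with Suc show ?case by simp
  qed (use assms in simp)
  show ?thesis
    using up[of "nat k"] down[of "nat (- k)"] by (cases "k \<ge> 0") simp_all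
qed

lemma fib_recurrent_eqI:
  assumes "fib_recurrent f" "fib_recurrent g" "f 0 = g 0" "f 1 = g 1"
  shows "f = g"
proof
  fix k
  have "fib_recurrent (\<lambda>k. 1 * f k + (-1) * g k)"
    using assms(1,2) by (rule fib_recurrent_lincomb)
  then show "f k = g k"
    using fib_recurrent_eq_0[of "\<lambda>k. 1 * f k + (-1) * g k" k] assms(3,4) by simp
qed

lemma fib_recurrent_Binet:
  "fib_recurrent (\<lambda>k. (((1 + sqrt 5) / 2) powi k - ((1 - sqrt 5) / 2) powi k) / sqrt 5)"
  using fib_recurrent_lincomb[OF fib_recurrent_power_int fib_recurrent_power_int,
      of "(1 + sqrt 5) / 2" "(1 - sqrt 5) / 2" "1 / sqrt 5" "- 1 / sqrt 5"]
  by (simp add: power2_eq_square algebra_simps diff_divide_distrib)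

lemma fibz_Binet:
  "fibz = (\<lambda>k. (((1 + sqrt 5) / 2) powi k - ((1 - sqrt 5) / 2) powi k) / sqrt 5)"
    (is "_ = ?B")
proof -
  have "?B 0 = 0" "?B 1 = 1"
    by (simp_all add: field_simps)
  with fib_recurrent_Binet show ?thesis
    unfolding fibz_def fib_recurrent_def[symmetric]
    by (intro the_equality) (auto intro: fib_recurrent_eqI)
qed

lemma fibz_recurrent: "fib_recurrent fibz"
  unfolding fibz_Binet by (rule fib_recurrent_Binet)

lemma fibz_0 [simp]: "fibz 0 = 0"
  and fibz_1 [simp]: "fibz 1 = 1"
  by (simp_all add: fibz_Binet field_simps)

lemma fibz_minus: "fibz (- int k) = (-1) ^ Suc k * fibz (int k)"
proof -
  define \<phi> \<psi> :: real where "\<phi> = (1 + sqrt 5) / 2" and "\<psi> = (1 - sqrt 5) / 2"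
  have "\<phi> * \<psi> = -1"
    unfolding \<phi>_def \<psi>_def by (simp add: field_simps)
  then have "inverse \<phi> = - \<psi>" "inverse \<psi> = - \<phi>"
    by (simp_all add: inverse_unique mult.commute)
  then have "\<phi> powi (- int k) = (-1) ^ k * \<psi> ^ k" "\<psi> powi (- int k) = (-1) ^ k * \<phi> ^ k"
    by (simp_all add: power_int_minus flip: power_inverse power_mult_distrib)
  then show ?thesis
    unfolding fibz_Binet \<phi>_def[symmetric] \<psi>_def[symmetric] by (simp add: field_simps)
qed

lemma fibz_minus_1 [simp]: "fibz (-1) = 1"
  using fibz_minus[of 1] by simp

lemma fib_recurrent_expand:
  assumes "fib_recurrent G"
  shows "G (a + k) = fibz (k - 1) * G a + fibz k * G (a + 1)"
proof -
  have "(\<lambda>k. G (a + k)) = (\<lambda>k. G a * fibz (-1 + k) + G (a + 1) * fibz k)"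
    by (intro fib_recurrent_eqI fib_recurrent_shift fib_recurrent_lincomb assms fibz_recurrent) simp_all
  then show ?thesis
    by (metis add.commute diff_conv_add_uminus mult.commute)
qed

lemma fibz_dOcagne:
  "fibz m * fibz (int k - 1) - fibz (int k) * fibz (m - 1) = (-1) ^ k * fibz (m - int k)"
proof -
  have "fibz (1 - int k) = (-1) ^ k * fibz (int k - 1)"
    using fibz_minus[of "k - 1"] by (cases k) simp_all
  then have "fibz (m - int k) = (-1) ^ k * (fibz m * fibz (int k - 1) - fibz (int k) * fibz (m - 1))"
    using fib_recurrent_expand[OF fibz_recurrent, of "- int k" m] fibz_minus[of k]
    by (simp add: algebra_simps)
  then show ?thesis
    by (simp flip: power_add)
qed

lemma fib_recurrent_dOcagne:
  assumes "fib_recurrent G"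
  shows "fibz (int k) * G (a + m) = fibz m * G (a + int k) - (-1) ^ k * fibz (m - int k) * G a"
proof -
  have "fibz (int k) * G (a + m) - fibz m * G (a + int k)
      = - (fibz m * fibz (int k - 1) - fibz (int k) * fibz (m - 1)) * G a"
    using fib_recurrent_expand[OF assms, of a m] fib_recurrent_expand[OF assms, of a "int k"]
    by (simp add: algebra_simps)
  then show ?thesis
    unfolding fibz_dOcagne by (simp add: algebra_simps)
qed

lemma fib_recurrent_partial_fraction:
  assumes "fib_recurrent G" and nonzero: "\<And>i. i \<le> k \<Longrightarrow> G (a + int i) \<noteq> 0"
  shows "fibz (int k) * G (a + m) / (\<Prod>i\<in>{0..k}. G (a + int i))
       = fibz m / (\<Prod>i\<in>{1..k}. G (a - 1 + int i))
         - (-1) ^ k * fibz (m - int k) / (\<Prod>i\<in>{1..k}. G (a + int i))"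
proof -
  define Q where "Q = (\<Prod>i\<in>{0..k}. G (a + int i))"
  define P\<^sub>0 where "P\<^sub>0 = (\<Prod>i\<in>{1..k}. G (a - 1 + int i))"
  define P\<^sub>1 where "P\<^sub>1 = (\<Prod>i\<in>{1..k}. G (a + int i))"
  have "Q \<noteq> 0"
    unfolding Q_def using nonzero by (simp add: prod_zero_iff)
  moreover have Q1: "Q = G a * P\<^sub>1"
    unfolding Q_def P\<^sub>1_def by (simp add: prod.atLeast_Suc_atMost)
  moreover have Q0: "Q = P\<^sub>0 * G (a + int k)"
    unfolding Q_def P\<^sub>0_def
    by (simp add: prod.atLeast1_atMost_eq atLeast0AtMost flip: lessThan_Suc_atMost)
  ultimately have "G a \<noteq> 0" "P\<^sub>1 \<noteq> 0" "P\<^sub>0 \<noteq> 0" "G (a + int k) \<noteq> 0"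
    by auto
  have "fibz (int k) * G (a + m) / Q
      = fibz m * G (a + int k) / Q - (-1) ^ k * fibz (m - int k) * G a / Q"
    by (simp add: fib_recurrent_dOcagne[OF assms(1)] diff_divide_distrib)
  also have "\<dots> = fibz m / P\<^sub>0 - (-1) ^ k * fibz (m - int k) / P\<^sub>1"
  proof -
    have "G (a + int k) / Q = 1 / P\<^sub>0"
      unfolding Q0 using \<open>G (a + int k) \<noteq> 0\<close> by simp
    moreover have "G a / Q = 1 / P\<^sub>1"
      unfolding Q1 using \<open>G a \<noteq> 0\<close> by simp
    ultimately show ?thesis
      by (metis times_divide_eq_right mult.right_neutral)
  qed
  finally show ?thesis
    unfolding Q_def P\<^sub>0_def P\<^sub>1_def .
qed

lemma sum_int_telescope:
  fixes f :: "int \<Rightarrow> 'a::ab_group_add"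
  assumes "0 \<le> n"
  shows "(\<Sum>j\<in>{1..n}. f (j - 1) - f j) = f 0 - f n"
  using assms
proof (induction n rule: int_ge_induct)
  case (step i)
  then have "{1..i + 1} = insert (i + 1) {1..i}"
    by auto
  with step show ?case
    by simp
qed simp

lemma minus_one_power_nat_odd_diff:
  fixes a b :: int
  assumes "0 \<le> a" "0 \<le> b" "odd (b - a)"
  shows "(-1 :: 'a::ring_1) ^ nat b = - ((-1) ^ nat a)"
proof -
  have "even b \<longleftrightarrow> odd a"
    using assms(3) even_add[of "b - a" a] by simp
  then show ?thesis
    using assms(1,2) by (simp add: minus_one_power_iff even_nat_iff)
qed

definition telescope_term :: "(int \<Rightarrow> real) \<Rightarrow> int \<Rightarrow> int \<Rightarrow> int \<Rightarrow> int \<Rightarrow> int \<Rightarrow> real" where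
  "telescope_term G r n t m j = (-1) ^ nat (r * (j + 1)) * fibz m ^ nat (n - j) * fibz (m - r) ^ nat j
      / (\<Prod>i\<in>{1..nat r}. G (j + t + int i))"

lemma fib_recurrent_summand_telescopes:
  fixes G :: "int \<Rightarrow> real" and r n t m j :: int
  assumes G: "fib_recurrent G" and "0 \<le> r" and j: "1 \<le> j" "j \<le> n"
    and nonzero: "\<And>k. j + t \<le> k \<Longrightarrow> k \<le> j + t + r \<Longrightarrow> G k \<noteq> 0"
  shows "fibz r * ((-1) ^ nat (r * j) * fibz m ^ nat (n - j) * fibz (m - r) ^ nat (j - 1) * G (j + t + m)
            / (\<Prod>i\<in>{0..nat r}. G (j + t + int i)))
       = telescope_term G r n t m (j - 1) - telescope_term G r n t m j"
proof -
  define W where "W = (-1) ^ nat (r * j) * fibz m ^ nat (n - j) * fibz (m - r) ^ nat (j - 1)"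
  have "G (j + t + int i) \<noteq> 0" if "i \<le> nat r" for i
    using assms(2) nonzero[of "j + t + int i"] that by (simp add: le_nat_iff)
  then have pf: "fibz r * G (j + t + m) / (\<Prod>i\<in>{0..nat r}. G (j + t + int i))
      = fibz m / (\<Prod>i\<in>{1..nat r}. G (j - 1 + t + int i))
        - (-1) ^ nat r * fibz (m - r) / (\<Prod>i\<in>{1..nat r}. G (j + t + int i))"
    using fib_recurrent_partial_fraction[OF G, of "nat r" "j + t" m] assms(2)
    by (simp add: algebra_simps)
  have "nat (n - (j - 1)) = Suc (nat (n - j))" "nat j = Suc (nat (j - 1))"
    using j by (simp_all add: nat_eq_iff)
  moreover have "nat (r * (j + 1)) = nat (r * j) + nat r"
    using j assms(2) by (simp add: algebra_simps nat_add_distrib)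
  ultimately have "W * fibz m
        = (-1) ^ nat (r * (j - 1 + 1)) * fibz m ^ nat (n - (j - 1)) * fibz (m - r) ^ nat (j - 1)"
      "W * ((-1) ^ nat r * fibz (m - r))
        = (-1) ^ nat (r * (j + 1)) * fibz m ^ nat (n - j) * fibz (m - r) ^ nat j"
    unfolding W_def by (simp_all add: power_add mult_ac)
  then have "W * (fibz r * G (j + t + m) / (\<Prod>i\<in>{0..nat r}. G (j + t + int i)))
      = telescope_term G r n t m (j - 1) - telescope_term G r n t m j"
    unfolding pf telescope_term_def by (simp add: right_diff_distrib)
  then show ?thesis
    unfolding W_def by (simp add: mult_ac)
qed

theorem mainTheorem8:
  fixes G :: "int \<Rightarrow> real" and r n t m :: int
  assumes "is_gibonacci G" and "r \<ge> 1" and "n \<ge> 1"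
    and "\<And>k. t + 1 \<le> k \<Longrightarrow> k \<le> n + t + r \<Longrightarrow> G k \<noteq> 0"
  shows "fibz r * (\<Sum>j\<in>{1..n}.
            (-1) ^ nat (r * j) * fibz m ^ nat (n - j) * fibz (m - r) ^ nat (j - 1) * G (j + t + m)
            / (\<Prod>i\<in>{0..nat r}. G (j + t + int i)))
       = (-1) ^ nat (r * (n - 1) + 1) * fibz (m - r) ^ nat n / (\<Prod>i\<in>{1..nat r}. G (n + t + int i))
         + (-1) ^ nat r * fibz m ^ nat n / (\<Prod>i\<in>{1..nat r}. G (t + int i))"
proof -
  let ?U = "telescope_term G r n t m"
  have G: "fib_recurrent G"
    using assms(1) unfolding is_gibonacci_def fib_recurrent_def by blast
  have "fibz r * (\<Sum>j\<in>{1..n}.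
            (-1) ^ nat (r * j) * fibz m ^ nat (n - j) * fibz (m - r) ^ nat (j - 1) * G (j + t + m)
            / (\<Prod>i\<in>{0..nat r}. G (j + t + int i))) = (\<Sum>j\<in>{1..n}. ?U (j - 1) - ?U j)"
    unfolding sum_distrib_left
    using fib_recurrent_summand_telescopes[OF G] assms(2,4) by (intro sum.cong) auto
  also have "\<dots> = ?U 0 - ?U n"
    using assms(3) by (simp add: sum_int_telescope)
  also have "(-1 :: real) ^ nat (r * (n + 1)) = - ((-1) ^ nat (r * (n - 1) + 1))"
    using assms(2,3) by (intro minus_one_power_nat_odd_diff) (simp, simp, simp add: algebra_simps)
  then have "?U 0 - ?U n
      = (-1) ^ nat (r * (n - 1) + 1) * fibz (m - r) ^ nat n / (\<Prod>i\<in>{1..nat r}. G (n + t + int i))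
        + (-1) ^ nat r * fibz m ^ nat n / (\<Prod>i\<in>{1..nat r}. G (t + int i))"
    unfolding telescope_term_def by simp
  finally show ?thesis .
qed

end
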